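(* Let $a,b\ge 3$ and $k\ge 2$ be integers, let $G=CB(k,a,b)$ be the cycle barbell, and let $P_{nb}(G)$ be its non-backtracking transition probability matrix. Then \[ \det\bigl(tI-P_{nb}(G)\bigr)=\frac{1}{16}\,(2t^a-1)(2t^b-1)\Bigl[(2t^a-1)(2t^b-1)t^{2(k-1)}-1\Bigr]. \]
   Context: The cycle barbell $CB(k,a,b)$ is the graph obtained from a cycle $C_a$, a path $P_k$ on $k$ vertices and a cycle $C_b$ by identifying one endpoint of the path with a vertex of $C_a$ and the other endpoint with a vertex of $C_b$. It has $a+b+k-2$ vertices and $a+b+k-1$ edges. The non-backtracking transition probability matrix $P_{nb}(G)$ is indexed by the arcs of $G$ (the ordered pairs $(u,v)$ with $\{u,v\}$ an edge); its entry from $(u,v)$ to $(v,w)$ is $1/(\deg(v)-1)$ for each neighbor $w\neq u$ of $v$, and all other entries are $0$. *)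

theory Defs
  imports "Jordan_Normal_Form.Char_Poly" "HOL-Library.Product_Lexorder"
begin

text \<open>Simple graphs on natural-number vertices, given by a vertex set and a set of
  undirected edges (2-element sets).\<close>

definition adj :: "nat set set \<Rightarrow> nat \<Rightarrow> nat \<Rightarrow> bool" where
  "adj E u v \<longleftrightarrow> u \<noteq> v \<and> {u, v} \<in> E"

definition graph_deg :: "nat set \<Rightarrow> nat set set \<Rightarrow> nat \<Rightarrow> nat" where
  "graph_deg V E v = card {w \<in> V. adj E v w}"

definition arcs :: "nat set \<Rightarrow> nat set set \<Rightarrow> (nat \<times> nat) set" where
  "arcs V E = {(u, v). u \<in> V \<and> v \<in> V \<and> adj E u v}"

definition arc_list :: "nat set \<Rightarrow> nat set set \<Rightarrow> (nat \<times> nat) list" where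
  "arc_list V E = sorted_list_of_set (arcs V E)"

definition P_nb :: "nat set \<Rightarrow> nat set set \<Rightarrow> real mat" where
  "P_nb V E = (let A = arc_list V E; n = length A in
     mat n n (\<lambda>(i, j). (case A ! i of (u, v) \<Rightarrow> case A ! j of (x, w) \<Rightarrow>
        if x = v \<and> w \<noteq> u then 1 / (real (graph_deg V E v) - 1) else 0)))"

text \<open>The cycle barbell CB(k,a,b): cycle C_a on vertices 0..a-1, path P_k with vertex
  sequence 0, a, a+1, ..., a+k-2, cycle C_b on vertices a+k-2, ..., a+k-2+b-1.\<close>

definition cb_vertices :: "nat \<Rightarrow> nat \<Rightarrow> nat \<Rightarrow> nat set" where
  "cb_vertices k a b = {0..<a + b + k - 2}"

definition cb_path :: "nat \<Rightarrow> nat \<Rightarrow> nat list" where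
  "cb_path k a = 0 # [a..<a + k - 1]"

definition cb_edges :: "nat \<Rightarrow> nat \<Rightarrow> nat \<Rightarrow> nat set set" where
  "cb_edges k a b =
     {{i, Suc i mod a} | i. i < a}
   \<union> {{cb_path k a ! i, cb_path k a ! Suc i} | i. i < k - 1}
   \<union> {{a + k - 2 + j, a + k - 2 + (Suc j mod b)} | j. j < b}"

end

theory Submission
  imports Defs
begin

text \<open>Order the arcs so that the six arcs entering one of the two vertices of degree 3 come
  last. Every other arc enters a vertex of degree 2, so its row in \<open>t I - P\<^sub>n\<^sub>b\<close> is \<open>t\<close> on the
  diagonal and \<open>-1\<close> at its unique non-backtracking successor. These arcs form six chains, around
  each cycle and along the path in both directions, and eliminating a chain of \<open>m\<close> rows yields a
  factor \<open>t\<^sup>m\<close> and moves the column of its first arc, divided by \<open>t\<^sup>m\<close>, onto the column of the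
  arc it runs into. What remains is a \<open>6 \<times> 6\<close> matrix with entries \<open>t\<close>, \<open>-1/(2 t\<^sup>a\<^sup>-\<^sup>1)\<close>,
  \<open>-1/(2 t\<^sup>b\<^sup>-\<^sup>1)\<close> and \<open>-1/(2 t\<^sup>k\<^sup>-\<^sup>2)\<close>, whose determinant four more pivots compute. This
  proves the identity for every \<open>t > 1\<close>, hence as polynomials.\<close>

section \<open>Determinants of matrices indexed by a list of keys\<close>

definition det_indexed :: "'a list \<Rightarrow> ('a \<Rightarrow> 'a \<Rightarrow> 'b :: comm_ring_1) \<Rightarrow> 'b" where
  "det_indexed xs M = det (mat (length xs) (length xs) (\<lambda>(i, j). M (xs ! i) (xs ! j)))"

lemma det_indexed_cong:
  assumes "\<And>r s. r \<in> set xs \<Longrightarrow> s \<in> set xs \<Longrightarrow> M r s = M' r s"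
  shows "det_indexed xs M = det_indexed xs M'"
  unfolding det_indexed_def by (rule arg_cong[where f = det], rule eq_matI) (auto simp: assms)

lemma det_indexed_map: "det_indexed (map f xs) M = det_indexed xs (\<lambda>i j. M (f i) (f j))"
  unfolding det_indexed_def by (rule arg_cong[where f = det], rule eq_matI) auto

lemma det_permute_rows_cols:
  assumes A: "A \<in> carrier_mat n n" and p: "p permutes {0..<n}"
  shows "det (mat n n (\<lambda>(i, j). A $$ (p i, p j))) = det A"
proof -
  define C where "C = mat n n (\<lambda>(i, j). A $$ (i, p j))"
  have C: "C \<in> carrier_mat n n" unfolding C_def by auto
  have p_less: "i < n \<Longrightarrow> p i < n" for i using p by (simp add: permutes_in_image)
  have "mat n n (\<lambda>(i, j). A $$ (p i, p j)) = mat n n (\<lambda>(i, j). C $$ (p i, j))"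
    by (rule eq_matI) (auto simp: C_def p_less)
  hence rows: "det (mat n n (\<lambda>(i, j). A $$ (p i, p j))) = signof p * det C"
    using det_permute_rows[OF C p] by simp
  have "det C = det (transpose_mat C)" using det_transpose[OF C] by simp
  also have "transpose_mat C = mat n n (\<lambda>(i, j). transpose_mat A $$ (p i, j))"
    by (rule eq_matI) (use A in \<open>auto simp: C_def p_less\<close>)
  also have "det \<dots> = signof p * det (transpose_mat A)"
    by (rule det_permute_rows[OF _ p]) (use A in auto)
  also have "det (transpose_mat A) = det A" using det_transpose[OF A] .
  finally show ?thesis using rows by (simp add: sign_def)
qed

lemma det_indexed_perm:
  assumes "distinct xs" and "distinct ys" and "set xs = set ys"
  shows "det_indexed xs M = det_indexed ys M"
proof -
  have "mset xs = mset ys" using assms by (simp add: set_eq_iff_mset_eq_distinct)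
  then obtain p where p: "p permutes {..<length ys}" and xs: "permute_list p ys = xs"
    by (rule mset_eq_permutation)
  define n where "n = length ys"
  have len: "length xs = n" unfolding xs[symmetric] n_def by simp
  have p': "p permutes {0..<n}" using p by (simp add: n_def atLeast0LessThan)
  have p_less: "i < n \<Longrightarrow> p i < n" for i using p' by (simp add: permutes_in_image)
  define A where "A = mat n n (\<lambda>(i, j). M (ys ! i) (ys ! j))"
  have "det_indexed xs M = det (mat n n (\<lambda>(i, j). A $$ (p i, p j)))"
    unfolding det_indexed_def len
    by (rule arg_cong[where f = det], rule eq_matI)
      (auto simp: A_def p_less xs[symmetric] permute_list_nth[OF p, unfolded n_def[symmetric]])
  also have "\<dots> = det A" by (rule det_permute_rows_cols[OF _ p']) (simp add: A_def)
  finally show ?thesis by (simp add: det_indexed_def A_def n_def)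
qed

lemma det_indexed_pair: "det_indexed [x, y] M = M x x * M y y - M x y * M y x"
proof -
  define A where "A = mat 2 2 (\<lambda>(i, j). M ([x, y] ! i) ([x, y] ! j))"
  have A: "A \<in> carrier_mat 2 2" by (simp add: A_def)
  have "det A = (\<Sum>j<2. A $$ (0, j) * cofactor A 0 j)"
    by (rule laplace_expansion_row[OF A]) simp
  also have "\<dots> = M x x * M y y - M x y * M y x"
    by (simp add: A_def cofactor_def det_single mat_delete_def numeral_2_eq_2 lessThan_Suc)
  finally show ?thesis by (simp add: det_indexed_def A_def numeral_2_eq_2)
qed

lemma det_indexed_pivot:
  fixes M :: "'a \<Rightarrow> 'a \<Rightarrow> 'b :: field"
  assumes d: "M x x \<noteq> 0"
  shows "det_indexed (x # xs) M =
    M x x * det_indexed xs (\<lambda>r s. M r s - M r x * M x s / M x x)"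
proof -
  define n where "n = length xs"
  define A where "A = mat (Suc n) (Suc n) (\<lambda>(i, j). M ((x # xs) ! i) ((x # xs) ! j))"
  define E where "E = mat (Suc n) (Suc n)
    (\<lambda>(i, j). if i = j then 1 else if j = 0 then - A $$ (i, 0) / M x x else 0)"
  have A: "A \<in> carrier_mat (Suc n) (Suc n)" unfolding A_def by auto
  have E: "E \<in> carrier_mat (Suc n) (Suc n)" unfolding E_def by auto
  have A_entry: "A $$ (i, j) = M ((x # xs) ! i) ((x # xs) ! j)" if "i < Suc n" "j < Suc n" for i j
    using that by (simp add: A_def)
  have det_E: "det E = 1"
    by (subst det_lower_triangular[OF _ E])
      (auto simp: E_def diag_mat_def prod_list_zero_iff intro!: prod_list_neutral)
  have EA: "(E * A) $$ (i, j) =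
      (if i = 0 then A $$ (0, j) else A $$ (i, j) - A $$ (i, 0) / M x x * A $$ (0, j))"
    if i: "i < Suc n" and j: "j < Suc n" for i j
  proof -
    have "(E * A) $$ (i, j) = (\<Sum>l<Suc n. E $$ (i, l) * A $$ (l, j))"
      using i j A E by (simp add: scalar_prod_def atLeast0LessThan)
    also have "\<dots> = (\<Sum>l<Suc n. (if l = i then A $$ (i, j) else 0) +
        (if l = 0 \<and> i \<noteq> 0 then - A $$ (i, 0) / M x x * A $$ (0, j) else 0))"
      by (rule sum.cong) (auto simp: E_def i)
    finally show ?thesis using i by (simp add: sum.distrib)
  qed
  have "det A = det (E * A)" using det_mult[OF E A] det_E by simp
  also have "\<dots> = (\<Sum>i<Suc n. (E * A) $$ (i, 0) * cofactor (E * A) i 0)"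
    by (rule laplace_expansion_column) (use E A in auto)
  also have "\<dots> = (\<Sum>i<Suc n. if i = 0 then M x x * cofactor (E * A) 0 0 else 0)"
    by (rule sum.cong) (auto simp: EA A_entry d)
  also have "\<dots> = M x x * det (mat_delete (E * A) 0 0)"
    by (simp add: cofactor_def)
  also have "mat_delete (E * A) 0 0 =
      mat n n (\<lambda>(i, j). M (xs ! i) (xs ! j) - M (xs ! i) x * M x (xs ! j) / M x x)"
    (is "_ = ?S")
  proof (rule eq_matI)
    fix i j assume "i < dim_row ?S" and "j < dim_col ?S"
    hence ij: "i < n" "j < n" by auto
    have "mat_delete (E * A) 0 0 $$ (i, j) = (E * A) $$ (Suc i, Suc j)"
      using ij E A by (simp add: mat_delete_def)
    also have "\<dots> = M (xs ! i) (xs ! j) - M (xs ! i) x * M x (xs ! j) / M x x"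
      using ij by (subst EA) (auto simp: A_entry)
    finally show "mat_delete (E * A) 0 0 $$ (i, j) = ?S $$ (i, j)"
      using ij by simp
  qed (use E A in auto)
  finally show ?thesis unfolding det_indexed_def A_def n_def by simp
qed

lemma det_indexed_eliminate_unit_row:
  fixes M :: "'a \<Rightarrow> 'a \<Rightarrow> 'b :: field"
  assumes t: "t \<noteq> 0" and x: "x \<notin> set xs"
    and row: "\<And>s. s \<in> set (x # xs) \<Longrightarrow> M x s = (if s = x then t else if s = y then -1 else 0)"
  shows "det_indexed (x # xs) M =
    t * det_indexed xs (\<lambda>r s. M r s + (if s = y then M r x / t else 0))"
proof -
  have "det_indexed (x # xs) M = t * det_indexed xs (\<lambda>r s. M r s - M r x * M x s / t)"
    using det_indexed_pivot[of M x xs] row[of x] t by simp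
  also have "det_indexed xs (\<lambda>r s. M r s - M r x * M x s / t) =
      det_indexed xs (\<lambda>r s. M r s + (if s = y then M r x / t else 0))"
    by (rule det_indexed_cong) (use x row in \<open>auto simp: t\<close>)
  finally show ?thesis .
qed

section \<open>Eliminating chains of unit rows\<close>

text \<open>Eliminating \<open>f l\<close> adds its column, divided by \<open>t\<close>, to the column of \<open>f (l + 1)\<close>;
  since the inner columns are zero outside the chain, after \<open>m\<close> steps only the column of the
  head \<open>f 0\<close>, divided by \<open>t\<^sup>m\<close>, arrives at the end \<open>f m\<close>.\<close>

lemma det_indexed_chain_elim:
  fixes M :: "'a \<Rightarrow> 'a \<Rightarrow> 'b :: field"
  assumes t: "t \<noteq> 0"
    and "distinct (map f [0..<m] @ R)"
    and "f m \<in> set R"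
    and "\<And>l s. l < m \<Longrightarrow> s \<in> set (map f [0..<m] @ R) \<Longrightarrow>
      M (f l) s = (if s = f l then t else if s = f (Suc l) then -1 else 0)"
    and "\<And>l r. 0 < l \<Longrightarrow> l < m \<Longrightarrow> r \<in> set R \<Longrightarrow> M r (f l) = 0"
  shows "det_indexed (map f [0..<m] @ R) M =
    t ^ m * det_indexed R (\<lambda>r s. M r s + (if 0 < m \<and> s = f m then M r (f 0) / t ^ m else 0))"
  using assms(2-)
proof (induction m arbitrary: f M)
  case 0
  then show ?case by simp
next
  case (Suc m f M)
  note dist = Suc.prems(1) and last = Suc.prems(2)
    and rows = Suc.prems(3) and cols = Suc.prems(4)
  define g where "g = f \<circ> Suc"
  have keys: "map f [0..<Suc m] @ R = f 0 # (map g [0..<m] @ R)"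
    by (simp add: g_def map_upt_Suc del: upt_Suc)
  have "inj_on f {0..<Suc m}" using dist by (simp add: distinct_map del: upt_Suc)
  hence inj: "i < Suc m \<Longrightarrow> j < Suc m \<Longrightarrow> f i = f j \<longleftrightarrow> i = j" for i j
    by (auto dest: inj_onD)
  have sub: "set (map g [0..<m] @ R) \<subseteq> set (map f [0..<Suc m] @ R)"
    unfolding keys by auto
  have not_R: "i < Suc m \<Longrightarrow> f i \<notin> set R" for i
    using dist by (auto simp: less_Suc_eq disjoint_iff)
  define M1 where "M1 r s = M r s + (if s = g 0 then M r (f 0) / t else 0)" for r s
  have "det_indexed (map f [0..<Suc m] @ R) M = t * det_indexed (map g [0..<m] @ R) M1"
    unfolding keys M1_def
  proof (rule det_indexed_eliminate_unit_row[OF t])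
    show "f 0 \<notin> set (map g [0..<m] @ R)" using dist keys by (metis distinct.simps(2))
    show "M (f 0) s = (if s = f 0 then t else if s = g 0 then -1 else 0)"
      if "s \<in> set (f 0 # map g [0..<m] @ R)" for s
    proof -
      have "s \<in> set (map f [0..<Suc m] @ R)" using that keys by simp
      thus ?thesis using rows[of 0 s] by (simp add: g_def)
    qed
  qed
  also have "det_indexed (map g [0..<m] @ R) M1 =
      t ^ m * det_indexed R (\<lambda>r s. M1 r s + (if 0 < m \<and> s = g m then M1 r (g 0) / t ^ m else 0))"
  proof (rule Suc.IH)
    show "distinct (map g [0..<m] @ R)" using dist keys by (metis distinct.simps(2))
    show "g m \<in> set R" using last by (simp add: g_def)
  next
    fix l s assume l: "l < m" and s: "s \<in> set (map g [0..<m] @ R)"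
    have "f 0 \<noteq> f (Suc (Suc l))"
      using inj[of 0 "Suc (Suc l)"] last not_R[of 0] l by (cases "Suc l = m") auto
    hence "M (f (Suc l)) (f 0) = 0"
      using rows[of "Suc l" "f 0"] l inj[of 0 "Suc l"] by simp
    moreover have "s \<in> set (map f [0..<Suc m] @ R)" using s sub by blast
    hence "M (f (Suc l)) s = (if s = f (Suc l) then t else if s = f (Suc (Suc l)) then -1 else 0)"
      using rows[of "Suc l" s] l by blast
    ultimately show "M1 (g l) s = (if s = g l then t else if s = g (Suc l) then -1 else 0)"
      by (simp add: M1_def g_def)
  next
    fix l r assume l: "0 < l" "l < m" and r: "r \<in> set R"
    thus "M1 r (g l) = 0" using cols[of "Suc l" r] inj[of "Suc l" 1] by (simp add: M1_def g_def)
  qed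
  also have "det_indexed R (\<lambda>r s. M1 r s + (if 0 < m \<and> s = g m then M1 r (g 0) / t ^ m else 0)) =
      det_indexed R
        (\<lambda>r s. M r s + (if 0 < Suc m \<and> s = f (Suc m) then M r (f 0) / t ^ Suc m else 0))"
  proof (rule det_indexed_cong)
    fix r s assume r: "r \<in> set R" and s: "s \<in> set R"
    show "M1 r s + (if 0 < m \<and> s = g m then M1 r (g 0) / t ^ m else 0) =
        M r s + (if 0 < Suc m \<and> s = f (Suc m) then M r (f 0) / t ^ Suc m else 0)"
    proof (cases "m = 0")
      case False
      have "s \<noteq> g 0" using s not_R[of 1] False by (auto simp: g_def)
      moreover have "M r (g 0) = 0" using cols[of 1 r] r False by (simp add: g_def)
      ultimately show ?thesis using False t by (simp add: M1_def g_def field_simps)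
    qed (simp add: M1_def g_def)
  qed
  finally show ?case by simp
qed

definition chain_keys :: "((nat \<Rightarrow> 'a) \<times> nat) list \<Rightarrow> 'a list" where
  "chain_keys cs = concat (map (\<lambda>(f, m). map f [0..<m]) cs)"

definition chain_correction ::
    "'b :: field \<Rightarrow> ((nat \<Rightarrow> 'a) \<times> nat) list \<Rightarrow> ('a \<Rightarrow> 'a \<Rightarrow> 'b) \<Rightarrow> 'a \<Rightarrow> 'a \<Rightarrow> 'b" where
  "chain_correction t cs M r s = (\<Sum>(f, m)\<leftarrow>cs. if 0 < m \<and> s = f m then M r (f 0) / t ^ m else 0)"

lemma chain_keys_Nil [simp]: "chain_keys [] = []"
  by (simp add: chain_keys_def)

lemma chain_keys_Cons [simp]: "chain_keys ((f, m) # cs) = map f [0..<m] @ chain_keys cs"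
  by (simp add: chain_keys_def)

lemma length_chain_keys: "length (chain_keys cs) = (\<Sum>(f, m)\<leftarrow>cs. m)"
  by (induction cs) auto

lemma chain_correction_Nil [simp]: "chain_correction t [] M r s = 0"
  by (simp add: chain_correction_def)

lemma chain_correction_Cons [simp]:
  "chain_correction t ((f, m) # cs) M r s =
    (if 0 < m \<and> s = f m then M r (f 0) / t ^ m else 0) + chain_correction t cs M r s"
  by (simp add: chain_correction_def)

lemma in_chain_keys: "(f, m) \<in> set cs \<Longrightarrow> l < m \<Longrightarrow> f l \<in> set (chain_keys cs)"
  by (induction cs) auto

lemma chain_correction_cong:
  assumes "\<And>f m. (f, m) \<in> set cs \<Longrightarrow> 0 < m \<Longrightarrow> M r (f 0) = M' r (f 0)"
  shows "chain_correction t cs M r s = chain_correction t cs M' r s"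
  unfolding chain_correction_def
  by (rule arg_cong[where f = sum_list], rule map_cong) (auto simp: assms)

lemma det_indexed_chains_elim:
  fixes M :: "'a \<Rightarrow> 'a \<Rightarrow> 'b :: field"
  assumes t: "t \<noteq> 0"
    and "distinct (chain_keys cs @ R)"
    and "\<And>f m. (f, m) \<in> set cs \<Longrightarrow> f m \<in> set R"
    and "\<And>f m l s. (f, m) \<in> set cs \<Longrightarrow> l < m \<Longrightarrow> s \<in> set (chain_keys cs @ R) \<Longrightarrow>
      M (f l) s = (if s = f l then t else if s = f (Suc l) then -1 else 0)"
    and "\<And>f m l r. (f, m) \<in> set cs \<Longrightarrow> 0 < l \<Longrightarrow> l < m \<Longrightarrow> r \<in> set (chain_keys cs @ R) \<Longrightarrow>
      r \<noteq> f (l - 1) \<Longrightarrow> r \<noteq> f l \<Longrightarrow> M r (f l) = 0"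
  shows "det_indexed (chain_keys cs @ R) M =
    t ^ (\<Sum>(f, m)\<leftarrow>cs. m) * det_indexed R (\<lambda>r s. M r s + chain_correction t cs M r s)"
  using assms(2-)
proof (induction cs arbitrary: M)
  case Nil
  then show ?case by simp
next
  case (Cons c cs M)
  note dist = Cons.prems(1) and last = Cons.prems(2)
    and rows = Cons.prems(3) and cols = Cons.prems(4)
  obtain f m where c: "c = (f, m)" by (cases c)
  define R' where "R' = chain_keys cs @ R"
  have keys: "chain_keys (c # cs) @ R = map f [0..<m] @ R'" by (simp add: c R'_def)
  have f_notin: "l < m \<Longrightarrow> f l \<notin> set R'" for l
    using dist unfolding keys by (auto simp: disjoint_iff)
  have keys_notin: "x \<in> set (chain_keys cs) \<Longrightarrow> x \<notin> set R" for x
    using dist by (auto simp: c)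
  have f_end: "f m \<notin> set (chain_keys cs)" using last[of f m] keys_notin by (auto simp: c)
  define M' where "M' r s = M r s + (if 0 < m \<and> s = f m then M r (f 0) / t ^ m else 0)" for r s
  have "det_indexed (chain_keys (c # cs) @ R) M = t ^ m * det_indexed R' M'"
    unfolding keys M'_def
  proof (rule det_indexed_chain_elim[OF t])
    show "distinct (map f [0..<m] @ R')" using dist keys by simp
    show "f m \<in> set R'" using last[of f m] by (simp add: c R'_def)
    show "M (f l) s = (if s = f l then t else if s = f (Suc l) then -1 else 0)"
      if "l < m" "s \<in> set (map f [0..<m] @ R')" for l s
    proof -
      have "s \<in> set (chain_keys (c # cs) @ R)" using that(2) keys by simp
      thus ?thesis using rows[of f m l s] that(1) by (simp add: c)
    qed
    show "M r (f l) = 0" if l: "0 < l" "l < m" and r: "r \<in> set R'" for l r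
    proof -
      have "r \<in> set (chain_keys (c # cs) @ R)" using r keys by simp
      moreover have "r \<noteq> f (l - 1)" "r \<noteq> f l" using r f_notin[of l] f_notin[of "l - 1"] l by auto
      ultimately show ?thesis using cols[of f m l r] l by (simp add: c)
    qed
  qed
  also have "det_indexed R' M' =
      t ^ (\<Sum>(f, m)\<leftarrow>cs. m) * det_indexed R (\<lambda>r s. M' r s + chain_correction t cs M' r s)"
    unfolding R'_def
  proof (rule Cons.IH)
    show "distinct (chain_keys cs @ R)" using dist by (simp add: c)
    show "\<And>g n. (g, n) \<in> set cs \<Longrightarrow> g n \<in> set R" using last by simp
  next
    fix g n l s assume gn: "(g, n) \<in> set cs" and l: "l < n" and s: "s \<in> set (chain_keys cs @ R)"
    have "M (g l) (f 0) = 0" if m: "0 < m"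
    proof -
      have "g l \<in> set R'" using in_chain_keys[OF gn l] by (simp add: R'_def)
      moreover have "g (Suc l) \<in> set R'"
        using in_chain_keys[OF gn, of "Suc l"] last[of g n] gn l
        by (cases "Suc l = n") (auto simp: R'_def)
      ultimately show ?thesis using rows[of g n l "f 0"] gn l m f_notin[of 0] keys by auto
    qed
    thus "M' (g l) s = (if s = g l then t else if s = g (Suc l) then -1 else 0)"
      using rows[of g n l s] gn l s by (auto simp: M'_def c)
  next
    fix g n l r assume gn: "(g, n) \<in> set cs" and l: "0 < l" "l < n"
      and r: "r \<in> set (chain_keys cs @ R)" "r \<noteq> g (l - 1)" "r \<noteq> g l"
    have "g l \<noteq> f m" using in_chain_keys[OF gn l(2)] f_end by auto
    thus "M' r (g l) = 0" using cols[of g n l r] gn l r by (auto simp: M'_def c)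
  qed
  also have "det_indexed R (\<lambda>r s. M' r s + chain_correction t cs M' r s) =
      det_indexed R (\<lambda>r s. M r s + chain_correction t (c # cs) M r s)"
  proof (rule det_indexed_cong)
    fix r s
    have "chain_correction t cs M' r s = chain_correction t cs M r s"
      by (rule chain_correction_cong) (use in_chain_keys f_end in \<open>force simp: M'_def\<close>)
    thus "M' r s + chain_correction t cs M' r s = M r s + chain_correction t (c # cs) M r s"
      by (simp add: M'_def c)
  qed
  finally show ?case by (simp add: c power_add)
qed

section \<open>The cycle barbell\<close>

locale cycle_barbell =
  fixes k a b :: nat
  assumes a_ge_3: "a \<ge> 3" and b_ge_3: "b \<ge> 3" and k_ge_2: "k \<ge> 2"
begin

abbreviation "V \<equiv> cb_vertices k a b"
abbreviation "E \<equiv> cb_edges k a b"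

text \<open>The two vertices of degree 3, the hubs, are \<open>0\<close>, where the path leaves \<open>C\<^sub>a\<close>,
  and \<open>c\<close>, where it enters \<open>C\<^sub>b\<close>; \<open>c = a\<close> when \<open>k = 2\<close>.\<close>

definition c :: nat where "c = a + k - 2"

lemma a_le_c: "a \<le> c"
  unfolding c_def using k_ge_2 by simp

definition nbrs :: "nat \<Rightarrow> nat set" where
  "nbrs u = (if u = 0 then {1, a - 1, a}
     else if u < a then {u - 1, if u = a - 1 then 0 else u + 1}
     else if u < c then {if u = a then 0 else u - 1, u + 1}
     else if u = c then {if k = 2 then 0 else c - 1, c + 1, c + b - 1}
     else {u - 1, if u = c + b - 1 then c else u + 1})"

lemma in_V_iff: "u \<in> V \<longleftrightarrow> u < c + b"
  unfolding cb_vertices_def c_def using k_ge_2 by auto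

lemma cb_path_nth: "i < k \<Longrightarrow> cb_path k a ! i = (if i = 0 then 0 else a + i - 1)"
  unfolding cb_path_def by (cases i) (auto simp: nth_Cons')

lemma edge_iff:
  "{u, w} \<in> E \<longleftrightarrow>
    (u < a \<and> w = Suc u mod a) \<or> (w < a \<and> u = Suc w mod a) \<or>
    (\<exists>i < k - 1. (u = cb_path k a ! i \<and> w = cb_path k a ! Suc i) \<or>
      (w = cb_path k a ! i \<and> u = cb_path k a ! Suc i)) \<or>
    (\<exists>j < b. (u = c + j \<and> w = c + Suc j mod b) \<or> (w = c + j \<and> u = c + Suc j mod b))"
  unfolding cb_edges_def c_def by (auto simp: doubleton_eq_iff)

lemma path_edge_iff:
  "(\<exists>i < k - 1. (u = cb_path k a ! i \<and> w = cb_path k a ! Suc i) \<or>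
      (w = cb_path k a ! i \<and> u = cb_path k a ! Suc i)) \<longleftrightarrow>
    (u = 0 \<and> w = a) \<or> (w = 0 \<and> u = a) \<or> (a \<le> u \<and> u < c \<and> w = Suc u) \<or> (a \<le> w \<and> w < c \<and> u = Suc w)"
proof
  assume "\<exists>i < k - 1. (u = cb_path k a ! i \<and> w = cb_path k a ! Suc i) \<or>
      (w = cb_path k a ! i \<and> u = cb_path k a ! Suc i)"
  then obtain i where i: "i < k - 1" and h: "(u = cb_path k a ! i \<and> w = cb_path k a ! Suc i) \<or>
      (w = cb_path k a ! i \<and> u = cb_path k a ! Suc i)"
    by blast
  have "i < k" "Suc i < k" using i by auto
  with h show "(u = 0 \<and> w = a) \<or> (w = 0 \<and> u = a) \<or> (a \<le> u \<and> u < c \<and> w = Suc u) \<or>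
      (a \<le> w \<and> w < c \<and> u = Suc w)"
    using i by (auto simp: cb_path_nth c_def split: if_splits)
next
  assume h: "(u = 0 \<and> w = a) \<or> (w = 0 \<and> u = a) \<or> (a \<le> u \<and> u < c \<and> w = Suc u) \<or>
      (a \<le> w \<and> w < c \<and> u = Suc w)"
  have p0: "cb_path k a ! 0 = 0" "cb_path k a ! 1 = a" using k_ge_2 by (auto simp: cb_path_nth)
  show "\<exists>i < k - 1. (u = cb_path k a ! i \<and> w = cb_path k a ! Suc i) \<or>
      (w = cb_path k a ! i \<and> u = cb_path k a ! Suc i)"
  proof (cases "(u = 0 \<and> w = a) \<or> (w = 0 \<and> u = a)")
    case True thus ?thesis using k_ge_2 p0 by (intro exI[of _ 0]) auto
  next
    case False
    show ?thesis
    proof (cases "a \<le> u \<and> u < c \<and> w = Suc u")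
      case True
      thus ?thesis using k_ge_2 by (intro exI[of _ "u - a + 1"]) (auto simp: cb_path_nth c_def)
    next
      case False
      hence "a \<le> w \<and> w < c \<and> u = Suc w" using h \<open>\<not> ((u = 0 \<and> w = a) \<or> (w = 0 \<and> u = a))\<close> by auto
      thus ?thesis using k_ge_2 by (intro exI[of _ "w - a + 1"]) (auto simp: cb_path_nth c_def)
    qed
  qed
qed

lemma cycle_b_edge_iff:
  "(\<exists>j < b. (u = c + j \<and> w = c + Suc j mod b) \<or> (w = c + j \<and> u = c + Suc j mod b)) \<longleftrightarrow>
    (c \<le> u \<and> u + 1 < c + b \<and> w = Suc u) \<or> (u = c + b - 1 \<and> w = c) \<or>
      (c \<le> w \<and> w + 1 < c + b \<and> u = Suc w) \<or> (w = c + b - 1 \<and> u = c)"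
proof
  assume "\<exists>j < b. (u = c + j \<and> w = c + Suc j mod b) \<or> (w = c + j \<and> u = c + Suc j mod b)"
  then obtain j where j: "j < b"
    and h: "(u = c + j \<and> w = c + Suc j mod b) \<or> (w = c + j \<and> u = c + Suc j mod b)"
    by blast
  have "Suc j mod b = (if Suc j = b then 0 else Suc j)" using j by auto
  thus "(c \<le> u \<and> u + 1 < c + b \<and> w = Suc u) \<or> (u = c + b - 1 \<and> w = c) \<or>
      (c \<le> w \<and> w + 1 < c + b \<and> u = Suc w) \<or> (w = c + b - 1 \<and> u = c)"
    using h j by (auto split: if_splits)
next
  assume h: "(c \<le> u \<and> u + 1 < c + b \<and> w = Suc u) \<or> (u = c + b - 1 \<and> w = c) \<or>
      (c \<le> w \<and> w + 1 < c + b \<and> u = Suc w) \<or> (w = c + b - 1 \<and> u = c)"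
  show "\<exists>j < b. (u = c + j \<and> w = c + Suc j mod b) \<or> (w = c + j \<and> u = c + Suc j mod b)"
  proof -
    { assume "c \<le> u \<and> u + 1 < c + b \<and> w = Suc u"
      hence ?thesis by (intro exI[of _ "u - c"]) auto }
    moreover
    { assume "c \<le> w \<and> w + 1 < c + b \<and> u = Suc w"
      hence ?thesis by (intro exI[of _ "w - c"]) auto }
    moreover
    { assume "(u = c + b - 1 \<and> w = c) \<or> (w = c + b - 1 \<and> u = c)"
      hence ?thesis using b_ge_3 by (intro exI[of _ "b - 1"]) auto }
    ultimately show ?thesis using h by blast
  qed
qed

lemma adj_iff:
  "adj E u w \<longleftrightarrow> u \<noteq> w \<and>
    ((u < a \<and> w = (if Suc u = a then 0 else Suc u)) \<or> (w < a \<and> u = (if Suc w = a then 0 else Suc w)) \<or>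
     (u = 0 \<and> w = a) \<or> (w = 0 \<and> u = a) \<or>
     (a \<le> u \<and> u < c \<and> w = Suc u) \<or> (a \<le> w \<and> w < c \<and> u = Suc w) \<or>
     (c \<le> u \<and> u + 1 < c + b \<and> w = Suc u) \<or> (u = c + b - 1 \<and> w = c) \<or>
     (c \<le> w \<and> w + 1 < c + b \<and> u = Suc w) \<or> (w = c + b - 1 \<and> u = c))"
proof -
  have "(u < a \<and> w = Suc u mod a) \<longleftrightarrow> (u < a \<and> w = (if Suc u = a then 0 else Suc u))"
    and "(w < a \<and> u = Suc w mod a) \<longleftrightarrow> (w < a \<and> u = (if Suc w = a then 0 else Suc w))"
    by auto
  thus ?thesis by (simp only: adj_def edge_iff path_edge_iff cycle_b_edge_iff disj_assoc)
qed

lemma adj_imp_in_nbrs: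
  assumes "adj E u w" and "u < c + b"
  shows "w \<in> nbrs u"
proof -
  obtain a' where a: "a = a' + 3" using a_ge_3 by (metis add.commute le_Suc_ex)
  obtain b' where b: "b = b' + 3" using b_ge_3 by (metis add.commute le_Suc_ex)
  obtain k' where k: "k = k' + 2" using k_ge_2 by (metis add.commute le_Suc_ex)
  show ?thesis
    using assms unfolding adj_iff nbrs_def c_def
    by (elim conjE disjE) (simp_all add: a b k split: if_splits)
qed

lemma in_nbrs_imp_adj:
  assumes w: "w \<in> nbrs u" and ub: "u < c + b"
  shows "w < c + b \<and> adj E u w"
proof -
  obtain a' where a: "a = a' + 3" using a_ge_3 by (metis add.commute le_Suc_ex)
  obtain b' where b: "b = b' + 3" using b_ge_3 by (metis add.commute le_Suc_ex)
  obtain k' where k: "k = k' + 2" using k_ge_2 by (metis add.commute le_Suc_ex)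
  have c: "c = a' + k' + 3" using c_def a k by simp
  consider "u = 0" | "0 < u" "u < a" | "a \<le> u" "u < c" | "u = c" | "c < u" by linarith
  thus ?thesis
  proof cases
    case 1
    hence "w = 1 \<or> w = a - 1 \<or> w = a" using w unfolding nbrs_def by auto
    thus ?thesis unfolding adj_iff 1 unfolding c unfolding a b by auto
  next
    case 2
    then obtain u' where u: "u = Suc u'" by (cases u) auto
    have "w = u' \<or> w = (if u = a - 1 then 0 else u + 1)" using w 2 unfolding nbrs_def u by auto
    thus ?thesis unfolding adj_iff c using 2 unfolding a b u by auto
  next
    case 3
    then obtain u' where u: "u = Suc u'" using a_ge_3 by (cases u) auto
    have "w = (if u = a then 0 else u') \<or> w = u + 1" using w 3 unfolding nbrs_def u by auto
    moreover have "adj E u (u + 1)" using 3 unfolding adj_iff by simp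
    moreover have "u \<noteq> a \<Longrightarrow> adj E u u'" using 3 unfolding adj_iff u by simp
    moreover have "u = a \<Longrightarrow> adj E u 0" using 3 a_ge_3 unfolding adj_iff by simp
    moreover have "u + 1 < c + b" using 3 b_ge_3 by simp
    ultimately show ?thesis using 3 u by (auto split: if_splits)
  next
    case 4
    have w': "w = (if k = 2 then 0 else c - 1) \<or> w = c + 1 \<or> w = c + b - 1"
      using w 4 a_le_c a_ge_3 by (simp add: nbrs_def)
    have A1: "adj E c (c + 1)" using b_ge_3 unfolding adj_iff by simp
    have A2: "adj E c (c + b - 1)" using b_ge_3 a_le_c unfolding adj_iff by simp
    have A3: "k = 2 \<Longrightarrow> adj E c 0" using a_ge_3 unfolding adj_iff c_def by simp
    have A4: "adj E c (c - 1)" if k3: "k \<noteq> 2"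
    proof -
      define d where "d = c - 1"
      have d: "c = Suc d" "a \<le> d" using k3 k_ge_2 unfolding d_def c_def by arith+
      show ?thesis unfolding d(1) adj_iff using d by simp
    qed
    show ?thesis using w' A1 A2 A3 A4 4 b_ge_3 by (cases "k = 2") auto
  next
    case 5
    then obtain u' where u: "u = Suc u'" by (cases u) auto
    have w': "w = u' \<or> w = (if u = c + b - 1 then c else u + 1)"
      using w 5 a_le_c unfolding nbrs_def u by auto
    have A1: "adj E u u'" using 5 ub unfolding adj_iff u by simp
    have A2: "u = c + b - 1 \<Longrightarrow> adj E u c" using 5 unfolding adj_iff by simp
    have A3: "adj E u (u + 1)" if ne: "u \<noteq> c + b - 1"
    proof -
      have "Suc u < c + b" using ne ub by arith
      thus ?thesis using 5 unfolding adj_iff by simp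
    qed
    show ?thesis using w' A1 A2 A3 5 ub u by (auto split: if_splits)
  qed
qed

lemma in_arcs_iff: "x \<in> arcs V E \<longleftrightarrow> fst x < c + b \<and> snd x \<in> nbrs (fst x)"
proof -
  obtain u w where x: "x = (u,w)" by (cases x)
  have "x \<in> arcs V E \<longleftrightarrow> u < c + b \<and> w < c + b \<and> adj E u w"
    unfolding x arcs_def in_V_iff by simp
  also have "\<dots> \<longleftrightarrow> u < c + b \<and> w \<in> nbrs u"
    using adj_imp_in_nbrs in_nbrs_imp_adj by blast
  finally show ?thesis by (simp add: x)
qed

lemma arc_swap: "x \<in> arcs V E \<Longrightarrow> (snd x, fst x) \<in> arcs V E"
  unfolding arcs_def adj_def by (auto simp: insert_commute)

lemma arc_fst_neq_snd: "x \<in> arcs V E \<Longrightarrow> fst x \<noteq> snd x"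
  unfolding arcs_def adj_def by auto

lemma graph_deg_eq_card_nbrs: "u < c + b \<Longrightarrow> graph_deg V E u = card (nbrs u)"
proof -
  assume u: "u < c + b"
  have "{w \<in> V. adj E u w} = nbrs u"
    using adj_imp_in_nbrs[OF _ u] in_nbrs_imp_adj[OF _ u] in_V_iff by blast
  thus ?thesis unfolding graph_deg_def by simp
qed

lemma nbrs_0: "nbrs 0 = {1, a - 1, a}"
  by (simp add: nbrs_def)

lemma nbrs_cycle_a: "0 < u \<Longrightarrow> u < a \<Longrightarrow> nbrs u = {u - 1, if u = a - 1 then 0 else u + 1}"
  by (simp add: nbrs_def)

lemma nbrs_path: "a \<le> u \<Longrightarrow> u < c \<Longrightarrow> nbrs u = {if u = a then 0 else u - 1, u + 1}"
  using a_ge_3 by (simp add: nbrs_def)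

lemma nbrs_c: "nbrs c = {if k = 2 then 0 else c - 1, c + 1, c + b - 1}"
  using a_ge_3 a_le_c by (simp add: nbrs_def)

lemma nbrs_cycle_b: "c < u \<Longrightarrow> nbrs u = {u - 1, if u = c + b - 1 then c else u + 1}"
  using a_ge_3 a_le_c by (simp add: nbrs_def)

lemma card_nbrs:
  assumes "u < c + b"
  shows "card (nbrs u) = (if u = 0 \<or> u = c then 3 else 2)"
proof -
  consider "u = 0" | "0 < u" "u < a" | "a \<le> u" "u < c" | "u = c" | "c < u" by linarith
  thus ?thesis
  proof cases
    case 1 thus ?thesis using a_ge_3 a_le_c by (simp add: nbrs_0)
  next
    case 2 thus ?thesis using a_ge_3 a_le_c by (simp add: nbrs_cycle_a)
  next
    case 3 thus ?thesis using a_ge_3 a_le_c by (simp add: nbrs_path)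
  next
    case 4
    have f1: "c - 1 \<noteq> c + 1" "c - 1 \<noteq> c + b - 1" "c + 1 \<noteq> c + b - 1" "0 \<noteq> c + 1" "0 \<noteq> c + b - 1"
      using a_ge_3 b_ge_3 a_le_c by arith+
    have "card (nbrs c) = 3" unfolding nbrs_c using f1 by (cases "k = 2") auto
    thus ?thesis using 4 by simp
  next
    case 5 thus ?thesis using a_ge_3 b_ge_3 a_le_c assms by (simp add: nbrs_cycle_b)
  qed
qed

lemma finite_nbrs: "finite (nbrs u)"
  by (simp add: nbrs_def)

lemma arcs_eq_Sigma: "arcs V E = Sigma {..<c + b} nbrs"
  using in_arcs_iff by auto

lemma card_arcs: "card (arcs V E) = 2 * (c + b) + 2"
proof -
  have c0: "c \<noteq> 0" using a_le_c a_ge_3 by simp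
  have "card (arcs V E) = (\<Sum>u<c + b. card (nbrs u))"
    unfolding arcs_eq_Sigma by (rule card_SigmaI) (auto simp: finite_nbrs)
  also have "\<dots> = (\<Sum>u<c + b. 2 + ((if u = 0 then 1 else 0) + (if u = c then 1 else 0)))"
    by (rule sum.cong) (auto simp: card_nbrs c0)
  also have "\<dots> = (\<Sum>u<c + b. 2) +
      ((\<Sum>u<c + b. if u = 0 then 1 else 0) + (\<Sum>u<c + b. if u = c then 1 else 0))"
    by (simp only: sum.distrib)
  also have "\<dots> = 2 * (c + b) + 2" using c0 b_ge_3 by simp
  finally show ?thesis .
qed

definition char_entry :: "real \<Rightarrow> nat \<times> nat \<Rightarrow> nat \<times> nat \<Rightarrow> real" where
  "char_entry t r s = (if r = s then t else 0) -
     (if fst s = snd r \<and> snd s \<noteq> fst r then 1 / (real (graph_deg V E (snd r)) - 1) else 0)"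

lemma deg2_step:
  assumes x: "x \<in> arcs V E" and xy: "snd x = fst y" and ne: "fst x \<noteq> snd y"
    and ns: "nbrs (snd x) = {fst x, snd y}"
  shows "y \<in> arcs V E"
    and "\<And>s. s \<in> arcs V E \<Longrightarrow>
      char_entry t x s = (if s = x then t else if s = y then -1 else 0)"
    and "\<And>r. r \<in> arcs V E \<Longrightarrow> r \<noteq> x \<Longrightarrow> r \<noteq> y \<Longrightarrow> char_entry t r y = 0"
proof -
  have xb: "snd x < c + b" using x arc_swap[OF x] in_arcs_iff by auto
  show y: "y \<in> arcs V E" using in_arcs_iff xb xy ns by auto
  have deg: "graph_deg V E (snd x) = 2" using graph_deg_eq_card_nbrs[OF xb] ns ne by simp
  have xne: "fst x \<noteq> snd x" using arc_fst_neq_snd[OF x] .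
  have yx: "y \<noteq> x" using xy xne by auto
  fix s assume s: "s \<in> arcs V E"
  have succ: "(fst s = snd x \<and> snd s \<noteq> fst x) \<longleftrightarrow> s = y"
  proof
    assume h: "fst s = snd x \<and> snd s \<noteq> fst x"
    hence "snd s \<in> nbrs (snd x)" using s in_arcs_iff by auto
    hence "snd s = snd y" using h ns by auto
    thus "s = y" using h xy by (simp add: prod_eq_iff)
  next
    assume "s = y" thus "fst s = snd x \<and> snd s \<noteq> fst x" using xy ne by auto
  qed
  show "char_entry t x s = (if s = x then t else if s = y then -1 else 0)"
    unfolding char_entry_def using succ deg yx xne by auto
next
  fix r assume r: "r \<in> arcs V E" "r \<noteq> x" "r \<noteq> y"
  have "\<not> (fst y = snd r \<and> snd y \<noteq> fst r)"
  proof
    assume h: "fst y = snd r \<and> snd y \<noteq> fst r"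
    have "fst r \<in> nbrs (snd r)" using arc_swap[OF r(1)] in_arcs_iff by auto
    hence "fst r = fst x" using h ns xy by auto
    hence "r = x" using h xy by (simp add: prod_eq_iff)
    thus False using r by simp
  qed
  thus "char_entry t r y = 0" unfolding char_entry_def using r by auto
qed

text \<open>Away from the hubs every vertex has degree 2, so the arcs split into six chains, which
  run around \<open>C\<^sub>a\<close>, around \<open>C\<^sub>b\<close> and along the path, each in both directions.
  A chain starts at an arc leaving a hub and ends, after \<open>m\<close> forced steps, at one of the six
  arcs entering a hub (\<open>hub_arcs\<close>). For \<open>k = 2\<close> the path chains are empty (\<open>m = 0\<close>).\<close>

definition cyc_a_fwd :: "nat \<Rightarrow> nat \<times> nat" where
  "cyc_a_fwd i = (i, if i = a - 1 then 0 else i + 1)"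

definition cyc_a_bwd :: "nat \<Rightarrow> nat \<times> nat" where
  "cyc_a_bwd j = (if j = 0 then 0 else a - j, a - 1 - j)"

definition cyc_b_fwd :: "nat \<Rightarrow> nat \<times> nat" where
  "cyc_b_fwd j = (c + j, if j = b - 1 then c else c + j + 1)"

definition cyc_b_bwd :: "nat \<Rightarrow> nat \<times> nat" where
  "cyc_b_bwd j = (if j = 0 then c else c + b - j, c + b - 1 - j)"

definition path_fwd :: "nat \<Rightarrow> nat \<times> nat" where
  "path_fwd l = (if l = 0 then 0 else a + l - 1, a + l)"

definition path_bwd :: "nat \<Rightarrow> nat \<times> nat" where
  "path_bwd j = (c - j, if j = k - 2 then 0 else c - j - 1)"

definition cb_chains :: "((nat \<Rightarrow> nat \<times> nat) \<times> nat) list" where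
  "cb_chains = [(cyc_a_fwd, a - 1), (cyc_a_bwd, a - 1), (cyc_b_fwd, b - 1), (cyc_b_bwd, b - 1),
    (path_fwd, k - 2), (path_bwd, k - 2)]"

definition hub_arcs :: "(nat \<times> nat) list" where
  "hub_arcs = [(a - 1, 0), (1, 0), (a, 0),
    (c + b - 1, c), (c + 1, c), (if k = 2 then 0 else c - 1, c)]"

definition arc_order :: "(nat \<times> nat) list" where
  "arc_order = chain_keys cb_chains @ hub_arcs"

definition deg2_chain :: "(nat \<Rightarrow> nat \<times> nat) \<Rightarrow> nat \<Rightarrow> bool" where
  "deg2_chain f m \<longleftrightarrow> (\<forall>l < m. snd (f l) = fst (f (Suc l)) \<and> fst (f l) \<noteq> snd (f (Suc l)) \<and>
    nbrs (snd (f l)) = {fst (f l), snd (f (Suc l))})"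

lemma deg2_chain_arcs:
  assumes "f 0 \<in> arcs V E" and "deg2_chain f m" and "l \<le> m"
  shows "f l \<in> arcs V E"
  using assms(3)
proof (induction l)
  case (Suc l)
  hence "f l \<in> arcs V E" "l < m" by auto
  thus ?case using deg2_step(1)[of "f l" "f (Suc l)"] assms(2) unfolding deg2_chain_def by blast
qed (use assms(1) in simp)

lemma deg2_chain_cyc_a_fwd: "deg2_chain cyc_a_fwd (a - 1)"
  unfolding deg2_chain_def
proof (intro allI impI)
  fix l assume l: "l < a - 1"
  have "nbrs (l + 1) = {l, if l + 1 = a - 1 then 0 else l + 2}"
    using nbrs_cycle_a[of "l + 1"] l by simp
  thus "snd (cyc_a_fwd l) = fst (cyc_a_fwd (Suc l)) \<and> fst (cyc_a_fwd l) \<noteq> snd (cyc_a_fwd (Suc l)) \<and>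
      nbrs (snd (cyc_a_fwd l)) = {fst (cyc_a_fwd l), snd (cyc_a_fwd (Suc l))}"
    using l a_ge_3 by (auto simp: cyc_a_fwd_def)
qed

lemma deg2_chain_cyc_a_bwd: "deg2_chain cyc_a_bwd (a - 1)"
  unfolding deg2_chain_def
proof (intro allI impI)
  fix l assume l: "l < a - 1"
  have "nbrs (a - 1 - l) = {a - 2 - l, if l = 0 then 0 else a - l}"
    using nbrs_cycle_a[of "a - 1 - l"] l a_ge_3 by auto
  thus "snd (cyc_a_bwd l) = fst (cyc_a_bwd (Suc l)) \<and> fst (cyc_a_bwd l) \<noteq> snd (cyc_a_bwd (Suc l)) \<and>
      nbrs (snd (cyc_a_bwd l)) = {fst (cyc_a_bwd l), snd (cyc_a_bwd (Suc l))}"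
    using l a_ge_3 by (auto simp: cyc_a_bwd_def)
qed

lemma deg2_chain_cyc_b_fwd: "deg2_chain cyc_b_fwd (b - 1)"
  unfolding deg2_chain_def
proof (intro allI impI)
  fix l assume l: "l < b - 1"
  have "nbrs (c + l + 1) = {c + l, if l + 1 = b - 1 then c else c + l + 2}"
    using nbrs_cycle_b[of "c + l + 1"] l by auto
  thus "snd (cyc_b_fwd l) = fst (cyc_b_fwd (Suc l)) \<and> fst (cyc_b_fwd l) \<noteq> snd (cyc_b_fwd (Suc l)) \<and>
      nbrs (snd (cyc_b_fwd l)) = {fst (cyc_b_fwd l), snd (cyc_b_fwd (Suc l))}"
    using l b_ge_3 by (auto simp: cyc_b_fwd_def)
qed

lemma deg2_chain_cyc_b_bwd: "deg2_chain cyc_b_bwd (b - 1)"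
  unfolding deg2_chain_def
proof (intro allI impI)
  fix l assume l: "l < b - 1"
  have "nbrs (c + b - 1 - l) = {c + b - 2 - l, if l = 0 then c else c + b - l}"
    using nbrs_cycle_b[of "c + b - 1 - l"] l b_ge_3 by auto
  thus "snd (cyc_b_bwd l) = fst (cyc_b_bwd (Suc l)) \<and> fst (cyc_b_bwd l) \<noteq> snd (cyc_b_bwd (Suc l)) \<and>
      nbrs (snd (cyc_b_bwd l)) = {fst (cyc_b_bwd l), snd (cyc_b_bwd (Suc l))}"
    using l b_ge_3 by (auto simp: cyc_b_bwd_def)
qed

lemma deg2_chain_path_fwd: "deg2_chain path_fwd (k - 2)"
  unfolding deg2_chain_def
proof (intro allI impI)
  fix l assume l: "l < k - 2"
  have "nbrs (a + l) = {if l = 0 then 0 else a + l - 1, a + l + 1}"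
    using nbrs_path[of "a + l"] l by (auto simp: c_def)
  thus "snd (path_fwd l) = fst (path_fwd (Suc l)) \<and> fst (path_fwd l) \<noteq> snd (path_fwd (Suc l)) \<and>
      nbrs (snd (path_fwd l)) = {fst (path_fwd l), snd (path_fwd (Suc l))}"
    using l a_ge_3 by (auto simp: path_fwd_def)
qed

lemma deg2_chain_path_bwd: "deg2_chain path_bwd (k - 2)"
  unfolding deg2_chain_def
proof (intro allI impI)
  fix l assume l: "l < k - 2"
  have "nbrs (c - l - 1) = {if l + 1 = k - 2 then 0 else c - l - 2, c - l}"
    using nbrs_path[of "c - l - 1"] l by (auto simp: c_def)
  thus "snd (path_bwd l) = fst (path_bwd (Suc l)) \<and> fst (path_bwd l) \<noteq> snd (path_bwd (Suc l)) \<and>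
      nbrs (snd (path_bwd l)) = {fst (path_bwd l), snd (path_bwd (Suc l))}"
    using l a_ge_3 by (auto simp: path_bwd_def c_def)
qed

lemma chain_heads:
  "cyc_a_fwd 0 = (0, 1)" "cyc_a_bwd 0 = (0, a - 1)" "path_fwd 0 = (0, a)"
  "cyc_b_fwd 0 = (c, c + 1)" "cyc_b_bwd 0 = (c, c + b - 1)"
  "path_bwd 0 = (c, if k = 2 then 0 else c - 1)"
  using a_ge_3 b_ge_3 k_ge_2
  by (auto simp: cyc_a_fwd_def cyc_a_bwd_def cyc_b_fwd_def cyc_b_bwd_def path_fwd_def path_bwd_def)

lemma hub_arcs_chain_ends:
  "hub_arcs = [cyc_a_fwd (a - 1), cyc_a_bwd (a - 1), path_bwd (k - 2),
    cyc_b_fwd (b - 1), cyc_b_bwd (b - 1), path_fwd (k - 2)]"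
  using a_ge_3 b_ge_3 k_ge_2
  by (simp add: hub_arcs_def cyc_a_fwd_def cyc_a_bwd_def cyc_b_fwd_def cyc_b_bwd_def
      path_fwd_def path_bwd_def c_def; arith)

lemma set_hub_arcs: "set hub_arcs = (\<lambda>(f, m). f m) ` set cb_chains"
  by (simp add: hub_arcs_chain_ends cb_chains_def insert_commute)

lemma cb_chains_props:
  assumes "(f, m) \<in> set cb_chains"
  shows "f 0 \<in> arcs V E" and "deg2_chain f m" and "f m \<in> set hub_arcs"
proof -
  have "f 0 \<in> {cyc_a_fwd 0, cyc_a_bwd 0, cyc_b_fwd 0, cyc_b_bwd 0, path_fwd 0, path_bwd 0}"
    using assms by (auto simp: cb_chains_def)
  thus "f 0 \<in> arcs V E"
    using a_ge_3 b_ge_3 k_ge_2 a_le_c by (auto simp: chain_heads in_arcs_iff nbrs_0 nbrs_c)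
  show "deg2_chain f m"
    using assms deg2_chain_cyc_a_fwd deg2_chain_cyc_a_bwd deg2_chain_cyc_b_fwd
      deg2_chain_cyc_b_bwd deg2_chain_path_fwd deg2_chain_path_bwd
    by (auto simp: cb_chains_def)
  show "f m \<in> set hub_arcs"
    using assms by (auto simp: set_hub_arcs)
qed

lemma cb_chains_arcs: "(f, m) \<in> set cb_chains \<Longrightarrow> l \<le> m \<Longrightarrow> f l \<in> arcs V E"
  using cb_chains_props(1,2) deg2_chain_arcs by blast

lemma set_arc_order_subset: "set arc_order \<subseteq> arcs V E"
proof -
  have "set (chain_keys cb_chains) \<subseteq> arcs V E"
    using cb_chains_arcs by (fastforce simp: chain_keys_def)
  moreover have "set hub_arcs \<subseteq> arcs V E"
    using cb_chains_arcs by (auto simp: set_hub_arcs)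
  ultimately show ?thesis by (simp add: arc_order_def)
qed

lemma chain_in_arc_order: "(f, m) \<in> set cb_chains \<Longrightarrow> l < m \<Longrightarrow> f l \<in> set arc_order"
  unfolding arc_order_def using in_chain_keys by fastforce

lemma cb_chains_members:
  "(cyc_a_fwd, a - 1) \<in> set cb_chains" "(cyc_a_bwd, a - 1) \<in> set cb_chains"
  "(cyc_b_fwd, b - 1) \<in> set cb_chains" "(cyc_b_bwd, b - 1) \<in> set cb_chains"
  "(path_fwd, k - 2) \<in> set cb_chains" "(path_bwd, k - 2) \<in> set cb_chains"
  by (auto simp: cb_chains_def)

lemma hub_arcs_in_arc_order:
  "(a - 1, 0) \<in> set arc_order" "(1, 0) \<in> set arc_order" "(a, 0) \<in> set arc_order"
  "(c + b - 1, c) \<in> set arc_order" "(c + 1, c) \<in> set arc_order"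
  "(if k = 2 then 0 else c - 1, c) \<in> set arc_order"
  by (auto simp: arc_order_def hub_arcs_def)

lemma arcs_at_0_in_arc_order: "w \<in> nbrs 0 \<Longrightarrow> (0, w) \<in> set arc_order"
proof -
  assume "w \<in> nbrs 0"
  hence "w = 1 \<or> w = a - 1 \<or> w = a" by (simp add: nbrs_0)
  moreover have "(0, 1) \<in> set arc_order"
    using chain_in_arc_order[OF cb_chains_members(1), of 0] a_ge_3 by (simp add: chain_heads)
  moreover have "(0, a - 1) \<in> set arc_order"
    using chain_in_arc_order[OF cb_chains_members(2), of 0] a_ge_3 by (simp add: chain_heads)
  moreover have "(0, a) \<in> set arc_order"
  proof (cases "k = 2")
    case True
    hence "c = a" unfolding c_def by simp
    thus ?thesis using hub_arcs_in_arc_order(6) True by simp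
  next
    case False
    thus ?thesis using chain_in_arc_order[OF cb_chains_members(5), of 0] k_ge_2
      by (simp add: chain_heads)
  qed
  ultimately show ?thesis by auto
qed

lemma arcs_at_cycle_a_in_arc_order:
  assumes u: "0 < u" "u < a" and w: "w \<in> nbrs u"
  shows "(u, w) \<in> set arc_order"
proof -
  have "(u, u - 1) \<in> set arc_order"
  proof (cases "u = 1")
    case False
    hence "cyc_a_bwd (a - u) = (u, u - 1)" using u by (simp add: cyc_a_bwd_def)
    thus ?thesis using chain_in_arc_order[OF cb_chains_members(2), of "a - u"] u False by simp
  qed (use hub_arcs_in_arc_order(2) in simp)
  moreover have "(u, if u = a - 1 then 0 else u + 1) \<in> set arc_order"
  proof (cases "u = a - 1")
    case False
    hence "cyc_a_fwd u = (u, u + 1)" by (simp add: cyc_a_fwd_def)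
    thus ?thesis using chain_in_arc_order[OF cb_chains_members(1), of u] u False by simp
  qed (use hub_arcs_in_arc_order(1) in simp)
  ultimately show ?thesis using w u by (auto simp: nbrs_cycle_a)
qed

lemma arcs_at_path_in_arc_order:
  assumes u: "a \<le> u" "u < c" and w: "w \<in> nbrs u"
  shows "(u, w) \<in> set arc_order"
proof -
  have "(u, if u = a then 0 else u - 1) \<in> set arc_order"
  proof (cases "u = a")
    case False
    hence j: "c - u < k - 2" "c - u \<noteq> k - 2" using u by (auto simp: c_def)
    hence "path_bwd (c - u) = (u, u - 1)" using u by (simp add: path_bwd_def)
    thus ?thesis using chain_in_arc_order[OF cb_chains_members(6), of "c - u"] j False by simp
  qed (use hub_arcs_in_arc_order(3) in simp)
  moreover have "(u, u + 1) \<in> set arc_order"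
  proof (cases "u + 1 = c")
    case True
    hence "k \<noteq> 2" "u = c - 1" using u by (auto simp: c_def)
    thus ?thesis using hub_arcs_in_arc_order(6) True by simp
  next
    case False
    hence j: "u + 1 - a < k - 2" "u + 1 - a \<noteq> 0" using u by (auto simp: c_def)
    hence "path_fwd (u + 1 - a) = (u, u + 1)" using u by (simp add: path_fwd_def)
    thus ?thesis using chain_in_arc_order[OF cb_chains_members(5), of "u + 1 - a"] j by simp
  qed
  ultimately show ?thesis using w u by (auto simp: nbrs_path)
qed

lemma arcs_at_c_in_arc_order: "w \<in> nbrs c \<Longrightarrow> (c, w) \<in> set arc_order"
proof -
  assume "w \<in> nbrs c"
  hence "w = (if k = 2 then 0 else c - 1) \<or> w = c + 1 \<or> w = c + b - 1" by (simp add: nbrs_c)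
  moreover have "(c, c + 1) \<in> set arc_order"
    using chain_in_arc_order[OF cb_chains_members(3), of 0] b_ge_3 by (simp add: chain_heads)
  moreover have "(c, c + b - 1) \<in> set arc_order"
    using chain_in_arc_order[OF cb_chains_members(4), of 0] b_ge_3 by (simp add: chain_heads)
  moreover have "(c, if k = 2 then 0 else c - 1) \<in> set arc_order"
  proof (cases "k = 2")
    case True
    hence "c = a" unfolding c_def by simp
    thus ?thesis using hub_arcs_in_arc_order(3) True by simp
  next
    case False
    thus ?thesis using chain_in_arc_order[OF cb_chains_members(6), of 0] k_ge_2
      by (simp add: chain_heads)
  qed
  ultimately show ?thesis by auto
qed

lemma arcs_at_cycle_b_in_arc_order:
  assumes u: "c < u" "u < c + b" and w: "w \<in> nbrs u"
  shows "(u, w) \<in> set arc_order"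
proof -
  have "(u, u - 1) \<in> set arc_order"
  proof (cases "u = c + 1")
    case False
    hence j: "c + b - u < b - 1" "c + b - u \<noteq> 0" using u by auto
    hence "cyc_b_bwd (c + b - u) = (u, u - 1)" using u by (simp add: cyc_b_bwd_def)
    thus ?thesis using chain_in_arc_order[OF cb_chains_members(4), of "c + b - u"] j by simp
  qed (use hub_arcs_in_arc_order(5) in simp)
  moreover have "(u, if u = c + b - 1 then c else u + 1) \<in> set arc_order"
  proof (cases "u = c + b - 1")
    case False
    hence j: "u - c < b - 1" using u by auto
    hence "cyc_b_fwd (u - c) = (u, u + 1)" using u False by (simp add: cyc_b_fwd_def)
    thus ?thesis using chain_in_arc_order[OF cb_chains_members(3), of "u - c"] j False by simp
  qed (use hub_arcs_in_arc_order(4) in simp)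
  ultimately show ?thesis using w u by (auto simp: nbrs_cycle_b)
qed

lemma set_arc_order: "set arc_order = arcs V E"
proof
  show "arcs V E \<subseteq> set arc_order"
  proof (clarify)
    fix u w assume "(u, w) \<in> arcs V E"
    hence u: "u < c + b" and w: "w \<in> nbrs u" by (auto simp: in_arcs_iff)
    consider "u = 0" | "0 < u" "u < a" | "a \<le> u" "u < c" | "u = c" | "c < u" by linarith
    thus "(u, w) \<in> set arc_order"
    proof cases
      case 1
      thus ?thesis using arcs_at_0_in_arc_order w by simp
    next
      case 2
      thus ?thesis using arcs_at_cycle_a_in_arc_order w by simp
    next
      case 3
      thus ?thesis using arcs_at_path_in_arc_order w by simp
    next
      case 4
      thus ?thesis using arcs_at_c_in_arc_order w by simp
    next
      case 5
      thus ?thesis using arcs_at_cycle_b_in_arc_order u w by simp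
    qed
  qed
qed (rule set_arc_order_subset)


lemma length_arc_order: "length arc_order = 2 * (c + b) + 2"
  using a_ge_3 b_ge_3 k_ge_2
  by (simp add: arc_order_def length_chain_keys cb_chains_def hub_arcs_def c_def)

lemma distinct_arc_order: "distinct arc_order"
  by (rule card_distinct) (simp add: set_arc_order card_arcs length_arc_order)

definition reduced_entry :: "real \<Rightarrow> nat \<times> nat \<Rightarrow> nat \<times> nat \<Rightarrow> real" where
  "reduced_entry t = (\<lambda>r s. char_entry t r s + chain_correction t cb_chains (char_entry t) r s)"

lemma det_char_entry_eliminate_chains:
  assumes t: "t \<noteq> 0"
  shows "det_indexed arc_order (char_entry t) =
    t ^ (\<Sum>(f, m)\<leftarrow>cb_chains. m) * det_indexed hub_arcs (reduced_entry t)"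
  unfolding arc_order_def reduced_entry_def
proof (rule det_indexed_chains_elim[OF t])
  show "distinct (chain_keys cb_chains @ hub_arcs)"
    using distinct_arc_order by (simp add: arc_order_def)
  show "\<And>f m. (f, m) \<in> set cb_chains \<Longrightarrow> f m \<in> set hub_arcs"
    using cb_chains_props(3) by blast
next
  fix f m l s assume fm: "(f, m) \<in> set cb_chains" and l: "l < m"
    and s: "s \<in> set (chain_keys cb_chains @ hub_arcs)"
  have s_arc: "s \<in> arcs V E" using s set_arc_order unfolding arc_order_def by blast
  have "f l \<in> arcs V E" using cb_chains_arcs[OF fm] l by simp
  thus "char_entry t (f l) s = (if s = f l then t else if s = f (Suc l) then - 1 else 0)"
    using deg2_step(2)[OF _ _ _ _ s_arc] cb_chains_props(2)[OF fm] l
    unfolding deg2_chain_def by blast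
next
  fix f m l r assume fm: "(f, m) \<in> set cb_chains" and l: "0 < l" "l < m"
    and r: "r \<in> set (chain_keys cb_chains @ hub_arcs)" "r \<noteq> f (l - 1)" "r \<noteq> f l"
  have r_arc: "r \<in> arcs V E" using r(1) set_arc_order unfolding arc_order_def by blast
  have prev_arc: "f (l - 1) \<in> arcs V E" using cb_chains_arcs[OF fm] l by simp
  have "Suc (l - 1) = l" using l by simp
  hence "snd (f (l - 1)) = fst (f l) \<and> fst (f (l - 1)) \<noteq> snd (f l) \<and>
      nbrs (snd (f (l - 1))) = {fst (f (l - 1)), snd (f l)}"
    using cb_chains_props(2)[OF fm] l unfolding deg2_chain_def by (metis less_imp_diff_less)
  thus "char_entry t r (f l) = 0" using deg2_step(3)[OF prev_arc _ _ _ r_arc r(2,3)] by blast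
qed

end

section \<open>The reduced matrix on the hub arcs\<close>

text \<open>The shape of the reduced matrix on the six hub arcs: rows and columns are the arcs
  entering the first hub from its cycle (twice) and from the path, then those entering the
  second hub likewise; \<open>P\<close>, \<open>Q\<close>, \<open>W\<close> are the weights \<open>1/(2 t\<^sup>m)\<close> of the chains of
  length \<open>m\<close> around the two cycles and along the path.\<close>

definition hub_matrix :: "'a \<Rightarrow> 'a \<Rightarrow> 'a \<Rightarrow> 'a \<Rightarrow> 'a :: field list list" where
  "hub_matrix t P Q W =
    [[t - P, 0, 0, 0, 0, -W],
     [0, t - P, 0, 0, 0, -W],
     [-P, -P, t, 0, 0, 0],
     [0, 0, -W, t - Q, 0, 0],
     [0, 0, -W, 0, t - Q, 0],
     [0, 0, 0, -Q, -Q, t]]"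

lemma det_hub_matrix:
  fixes t P Q W :: "'a :: field"
  assumes tp: "t - P \<noteq> 0" and tq: "t - Q \<noteq> 0"
  shows "det_indexed [0..<6] (\<lambda>i j. hub_matrix t P Q W ! i ! j) =
    (t - P)^2 * (t - Q)^2 * t^2 - 4 * P * Q * W^2 * (t - P) * (t - Q)"
  (is "det_indexed _ ?T = _")
proof -
  txt \<open>Pivoting on the keys \<open>0, 1, 3, 4\<close> leaves a \<open>2 \<times> 2\<close> matrix on the keys \<open>2, 5\<close>.\<close>
  define X where "X = (2 * P * W / (t - P)) * (2 * Q * W / (t - Q))"
  have X: "X * ((t - P) * (t - Q)) = 4 * P * Q * W^2"
    using tp tq by (simp add: X_def power2_eq_square)
  have "det_indexed [0..<6] ?T = det_indexed [0, 1, 3, 4, 2, 5] ?T"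
    by (rule det_indexed_perm) (auto simp: upt_rec)
  also have "\<dots> = (t - P)^2 * (t - Q)^2 * (t * t - X)"
    using tp tq
    by (simp add: hub_matrix_def X_def det_indexed_pivot det_indexed_pair power2_eq_square)
  also have "\<dots> = (t - P)^2 * (t - Q)^2 * t^2 - X * ((t - P) * (t - Q)) * ((t - P) * (t - Q))"
    by (simp add: algebra_simps power2_eq_square)
  finally show ?thesis by (simp add: X mult_ac)
qed

context cycle_barbell
begin

lemma graph_deg_hubs: "graph_deg V E 0 = 3" "graph_deg V E c = 3"
  using graph_deg_eq_card_nbrs card_nbrs a_le_c a_ge_3 b_ge_3 by auto

definition hub_char :: "real \<Rightarrow> nat \<times> nat \<Rightarrow> nat \<times> nat \<Rightarrow> real" where
  "hub_char t r s = (if r = s then t else 0) - (if fst s = snd r \<and> snd s \<noteq> fst r then 1/2 else 0)"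

lemma char_entry_into_hub: "snd r = 0 \<or> snd r = c \<Longrightarrow> char_entry t r s = hub_char t r s"
  unfolding char_entry_def hub_char_def using graph_deg_hubs by auto

lemma less_6_cases: "i < (6::nat) \<Longrightarrow> i = 0 \<or> i = 1 \<or> i = 2 \<or> i = 3 \<or> i = 4 \<or> i = 5"
  by auto

lemma hub_arcs_nth_eq_iff: "i < 6 \<Longrightarrow> j < 6 \<Longrightarrow> hub_arcs ! i = hub_arcs ! j \<longleftrightarrow> i = j"
proof -
  have "distinct hub_arcs" using distinct_arc_order by (simp add: arc_order_def)
  thus "i < 6 \<Longrightarrow> j < 6 \<Longrightarrow> hub_arcs ! i = hub_arcs ! j \<longleftrightarrow> i = j"
    by (simp add: nth_eq_iff_index_eq hub_arcs_def)
qed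

lemma chain_correction_cb_chains:
  "chain_correction t cb_chains M r s =
    (if s = hub_arcs ! 0 then M r (cyc_a_fwd 0) / t ^ (a - 1) else 0) +
    (if s = hub_arcs ! 1 then M r (cyc_a_bwd 0) / t ^ (a - 1) else 0) +
    (if s = hub_arcs ! 3 then M r (cyc_b_fwd 0) / t ^ (b - 1) else 0) +
    (if s = hub_arcs ! 4 then M r (cyc_b_bwd 0) / t ^ (b - 1) else 0) +
    (if 0 < k - 2 \<and> s = hub_arcs ! 5 then M r (path_fwd 0) / t ^ (k - 2) else 0) +
    (if 0 < k - 2 \<and> s = hub_arcs ! 2 then M r (path_bwd 0) / t ^ (k - 2) else 0)"
  using a_ge_3 b_ge_3 by (simp add: cb_chains_def hub_arcs_chain_ends)

lemma reduced_entry_hub_arcs: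
  assumes i: "i < 6" and j: "j < 6"
  shows "reduced_entry t (hub_arcs ! i) (hub_arcs ! j) =
    hub_char t (hub_arcs ! i) (hub_arcs ! j) +
    (if j = 0 then hub_char t (hub_arcs ! i) (0, 1) / t ^ (a - 1) else 0) +
    (if j = 1 then hub_char t (hub_arcs ! i) (0, a - 1) / t ^ (a - 1) else 0) +
    (if j = 3 then hub_char t (hub_arcs ! i) (c, c + 1) / t ^ (b - 1) else 0) +
    (if j = 4 then hub_char t (hub_arcs ! i) (c, c + b - 1) / t ^ (b - 1) else 0) +
    (if 0 < k - 2 \<and> j = 5 then hub_char t (hub_arcs ! i) (0, a) / t ^ (k - 2) else 0) +
    (if 0 < k - 2 \<and> j = 2 then hub_char t (hub_arcs ! i) (c, c - 1) / t ^ (k - 2) else 0)"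
proof -
  have into_hub: "snd (hub_arcs ! i) = 0 \<or> snd (hub_arcs ! i) = c"
    using i by (auto simp: hub_arcs_def dest!: less_6_cases)
  show ?thesis
    unfolding reduced_entry_def chain_correction_cb_chains chain_heads
      char_entry_into_hub[OF into_hub]
    using hub_arcs_nth_eq_iff[OF j] by simp
qed

definition hub_table :: "real \<Rightarrow> real list list" where
  "hub_table t = hub_matrix t (1/2 / t ^ (a - 1)) (1/2 / t ^ (b - 1)) (1/2 / t ^ (k - 2))"

text \<open>For \<open>k = 2\<close> the hubs are adjacent, and the entries \<open>-W = -1/2\<close> of the table come
  from \<open>char_entry\<close> itself rather than from the (empty) path chains.\<close>

lemma reduced_entry_eq_hub_table_k2:
  assumes k: "k = 2" and i: "i < 6" and j: "j < 6"
  shows "reduced_entry t (hub_arcs ! i) (hub_arcs ! j) = hub_table t ! i ! j"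
proof -
  have c: "c = a" unfolding c_def using k by simp
  have hub_arcs: "hub_arcs = [(a - 1, 0), (1, 0), (a, 0), (a + b - 1, a), (a + 1, a), (0, a)]"
    unfolding hub_arcs_def c using k by simp
  obtain a' where a: "a = a' + 3" using a_ge_3 by (metis add.commute le_Suc_ex)
  obtain b' where b: "b = b' + 3" using b_ge_3 by (metis add.commute le_Suc_ex)
  have "reduced_entry t (hub_arcs ! i) (hub_arcs ! j) =
    hub_char t (hub_arcs ! i) (hub_arcs ! j) +
    (if j = 0 then hub_char t (hub_arcs ! i) (0, 1) / t ^ (a - 1) else 0) +
    (if j = 1 then hub_char t (hub_arcs ! i) (0, a - 1) / t ^ (a - 1) else 0) +
    (if j = 3 then hub_char t (hub_arcs ! i) (a, a + 1) / t ^ (b - 1) else 0) +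
    (if j = 4 then hub_char t (hub_arcs ! i) (a, a + b - 1) / t ^ (b - 1) else 0)"
    unfolding reduced_entry_hub_arcs[OF i j] c using k by simp
  also have "\<dots> = hub_table t ! i ! j"
    unfolding hub_char_def hub_table_def hub_arcs using i j k unfolding a b
    by (elim less_6_cases[elim_format] disjE; simp add: hub_matrix_def)
  finally show ?thesis .
qed

lemma reduced_entry_eq_hub_table_k3:
  assumes k: "k \<noteq> 2" and i: "i < 6" and j: "j < 6"
  shows "reduced_entry t (hub_arcs ! i) (hub_arcs ! j) = hub_table t ! i ! j"
proof -
  obtain a' where a: "a = a' + 3" using a_ge_3 by (metis add.commute le_Suc_ex)
  obtain b' where b: "b = b' + 3" using b_ge_3 by (metis add.commute le_Suc_ex)
  have "3 \<le> k" using k_ge_2 k by simp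
  then obtain k' where k': "k = k' + 3" by (metis add.commute le_Suc_ex)
  have c: "c = a' + k' + 4" unfolding c_def using a k' by simp
  have hub_arcs: "hub_arcs = [(a - 1, 0), (1, 0), (a, 0), (c + b - 1, c), (c + 1, c), (c - 1, c)]"
    unfolding hub_arcs_def using k by simp
  have "reduced_entry t (hub_arcs ! i) (hub_arcs ! j) =
    hub_char t (hub_arcs ! i) (hub_arcs ! j) +
    (if j = 0 then hub_char t (hub_arcs ! i) (0, 1) / t ^ (a - 1) else 0) +
    (if j = 1 then hub_char t (hub_arcs ! i) (0, a - 1) / t ^ (a - 1) else 0) +
    (if j = 3 then hub_char t (hub_arcs ! i) (c, c + 1) / t ^ (b - 1) else 0) +
    (if j = 4 then hub_char t (hub_arcs ! i) (c, c + b - 1) / t ^ (b - 1) else 0) +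
    (if j = 5 then hub_char t (hub_arcs ! i) (0, a) / t ^ (k - 2) else 0) +
    (if j = 2 then hub_char t (hub_arcs ! i) (c, c - 1) / t ^ (k - 2) else 0)"
    unfolding reduced_entry_hub_arcs[OF i j] using k k_ge_2 by simp
  also have "\<dots> = hub_table t ! i ! j"
    unfolding hub_char_def hub_table_def hub_arcs using i j unfolding c unfolding a b k'
    by (elim less_6_cases[elim_format] disjE; simp add: hub_matrix_def)
  finally show ?thesis .
qed

lemma reduced_entry_eq_hub_table:
  assumes i: "i < 6" and j: "j < 6"
  shows "reduced_entry t (hub_arcs ! i) (hub_arcs ! j) = hub_table t ! i ! j"
  using reduced_entry_eq_hub_table_k2[OF _ i j] reduced_entry_eq_hub_table_k3[OF _ i j] by blast

lemma det_hub_arcs: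
  fixes t :: real
  defines "P \<equiv> 1/2 / t ^ (a - 1)" and "Q \<equiv> 1/2 / t ^ (b - 1)" and "W \<equiv> 1/2 / t ^ (k - 2)"
  assumes tp: "t - P \<noteq> 0" and tq: "t - Q \<noteq> 0"
  shows "det_indexed hub_arcs (reduced_entry t) =
    (t - P)^2 * (t - Q)^2 * t^2 - 4 * P * Q * W^2 * (t - P) * (t - Q)"
proof -
  have "length hub_arcs = 6" by (simp add: hub_arcs_def)
  hence "map (\<lambda>i. hub_arcs ! i) [0..<6] = hub_arcs"
    using map_nth[of hub_arcs] by simp
  hence "det_indexed hub_arcs (reduced_entry t) =
      det_indexed [0..<6] (\<lambda>i j. reduced_entry t (hub_arcs ! i) (hub_arcs ! j))"
    using det_indexed_map[of "\<lambda>i. hub_arcs ! i" "[0..<6]" "reduced_entry t"] by simp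
  also have "\<dots> = det_indexed [0..<6] (\<lambda>i j. hub_table t ! i ! j)"
    by (rule det_indexed_cong) (simp add: reduced_entry_eq_hub_table)
  also have "\<dots> = (t - P)^2 * (t - Q)^2 * t^2 - 4 * P * Q * W^2 * (t - P) * (t - Q)"
    unfolding hub_table_def P_def[symmetric] Q_def[symmetric] W_def[symmetric]
    by (rule det_hub_matrix[OF tp tq])
  finally show ?thesis .
qed

lemma finite_arcs: "finite (arcs V E)"
  using set_arc_order[symmetric] by simp

lemma poly_char_poly_eq_det_indexed:
  fixes t :: real
  shows "poly (char_poly (P_nb V E)) t = det_indexed arc_order (char_entry t)"
proof -
  define A where "A = arc_list V E"
  define n where "n = length A"
  have dist_A: "distinct A" and set_A: "set A = arcs V E"
    unfolding A_def arc_list_def using finite_arcs by auto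
  have P: "P_nb V E \<in> carrier_mat n n"
    unfolding P_nb_def A_def n_def by (simp add: Let_def)
  have "poly (char_poly (P_nb V E)) t = det (- char_matrix (P_nb V E) t)"
    by (rule char_poly_matrix[OF P])
  also have "- char_matrix (P_nb V E) t = mat n n (\<lambda>(i, j). char_entry t (A ! i) (A ! j))"
    (is "_ = ?C")
  proof (rule eq_matI)
    fix i j assume "i < dim_row ?C" and "j < dim_col ?C"
    hence ij: "i < n" "j < n" by auto
    have eq: "A ! i = A ! j \<longleftrightarrow> i = j" using dist_A ij by (simp add: n_def nth_eq_iff_index_eq)
    obtain u v where uv: "A ! i = (u, v)" by (cases "A ! i")
    obtain x w where xw: "A ! j = (x, w)" by (cases "A ! j")
    show "(- char_matrix (P_nb V E) t) $$ (i, j) = ?C $$ (i, j)"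
      using ij P eq uv xw unfolding char_matrix_def
      by (simp add: P_nb_def Let_def A_def[symmetric] n_def[symmetric] char_entry_def)
  qed (use P in \<open>auto simp: char_matrix_def\<close>)
  also have "det ?C = det_indexed A (char_entry t)"
    unfolding det_indexed_def n_def by simp
  also have "\<dots> = det_indexed arc_order (char_entry t)"
    by (rule det_indexed_perm[OF dist_A distinct_arc_order]) (simp add: set_A set_arc_order)
  finally show ?thesis .
qed

end

lemma det_hub_matrix_rescaled:
  fixes t A B C :: real
  assumes "A \<noteq> 0" and "B \<noteq> 0" and "C \<noteq> 0"
  shows "(A * B * C)^2 * ((t - 1/2/A)^2 * (t - 1/2/B)^2 * t^2 -
      4 * (1/2/A) * (1/2/B) * (1/2/C)^2 * (t - 1/2/A) * (t - 1/2/B)) =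
    1/16 * ((2 * t * A - 1) * (2 * t * B - 1) * ((2 * t * A - 1) * (2 * t * B - 1) * (t * C)^2 - 1))"
  using assms by (simp add: field_simps power2_eq_square)

context cycle_barbell
begin

lemma poly_char_poly_P_nb:
  fixes t :: real
  assumes t: "t > 1"
  shows "poly (char_poly (P_nb V E)) t =
    1/16 * ((2 * t^a - 1) * (2 * t^b - 1) * ((2 * t^a - 1) * (2 * t^b - 1) * t^(2 * (k - 1)) - 1))"
proof -
  define A B C where "A = t ^ (a - 1)" and "B = t ^ (b - 1)" and "C = t ^ (k - 2)"
  have ABC: "A \<ge> 1" "B \<ge> 1" "C \<ge> 1" unfolding A_def B_def C_def using t by auto
  hence "1/2 / A \<le> 1/2" "1/2 / B \<le> 1/2" by (simp_all add: field_simps)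
  hence tp: "t - 1/2 / A \<noteq> 0" and tq: "t - 1/2 / B \<noteq> 0"
    using t by linarith+
  have ta: "t ^ a = t * A" using a_ge_3 by (cases a) (auto simp: A_def)
  have tb: "t ^ b = t * B" using b_ge_3 by (cases b) (auto simp: B_def)
  have tk: "t ^ (2 * (k - 1)) = (t * C)^2"
  proof -
    have "2 * (k - 1) = 2 + 2 * (k - 2)" using k_ge_2 by simp
    hence "t ^ (2 * (k - 1)) = t^2 * t ^ (2 * (k - 2))" by (simp only: power_add)
    also have "t ^ (2 * (k - 2)) = C^2"
      unfolding C_def by (simp add: power_mult[symmetric] mult.commute)
    finally show ?thesis by (simp add: power_mult_distrib)
  qed
  have "(\<Sum>(f, m)\<leftarrow>cb_chains. m) = 2 * (a - 1) + 2 * (b - 1) + 2 * (k - 2)"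
    by (simp add: cb_chains_def)
  hence chains_power: "t ^ (\<Sum>(f, m)\<leftarrow>cb_chains. m) = (A * B * C)^2"
    unfolding A_def B_def C_def
    by (simp add: power_add power_mult_distrib power_mult[symmetric] mult.commute)
  have "poly (char_poly (P_nb V E)) t = det_indexed arc_order (char_entry t)"
    by (rule poly_char_poly_eq_det_indexed)
  also have "\<dots> = (A * B * C)^2 * det_indexed hub_arcs (reduced_entry t)"
    using det_char_entry_eliminate_chains[of t] t chains_power by simp
  also have "det_indexed hub_arcs (reduced_entry t) =
      (t - 1/2 / A)^2 * (t - 1/2 / B)^2 * t^2 -
        4 * (1/2 / A) * (1/2 / B) * (1/2 / C)^2 * (t - 1/2 / A) * (t - 1/2 / B)"
    using det_hub_arcs[OF tp[unfolded A_def] tq[unfolded B_def]] unfolding A_def B_def C_def .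
  also have "(A * B * C)^2 * \<dots> =
      1/16 * ((2 * t * A - 1) * (2 * t * B - 1) * ((2 * t * A - 1) * (2 * t * B - 1) * (t * C)^2 - 1))"
    by (rule det_hub_matrix_rescaled) (use ABC in auto)
  also have "\<dots> = 1/16 * ((2 * t^a - 1) * (2 * t^b - 1) *
      ((2 * t^a - 1) * (2 * t^b - 1) * t^(2 * (k - 1)) - 1))"
    unfolding ta tb tk by (simp add: mult.assoc)
  finally show ?thesis .
qed

end

lemma poly_eqI_on_Ioi:
  fixes p q :: "real poly"
  assumes "\<And>t. t > x \<Longrightarrow> poly p t = poly q t"
  shows "p = q"
proof (rule ccontr)
  assume "p \<noteq> q"
  hence "finite {t. poly (p - q) t = 0}" by (intro poly_roots_finite) simp
  moreover have "{x<..} \<subseteq> {t. poly (p - q) t = 0}" using assms by auto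
  ultimately show False using infinite_Ioi finite_subset by blast
qed

theorem lemma5p4:
  fixes k a b :: nat
  assumes "a \<ge> 3" and "b \<ge> 3" and "k \<ge> 2"
  shows "char_poly (P_nb (cb_vertices k a b) (cb_edges k a b)) =
    [:1/16 :: real:] * ((([:2:] * monom 1 a) - 1) * (([:2:] * monom 1 b) - 1) *
      ((([:2:] * monom 1 a) - 1) * (([:2:] * monom 1 b) - 1) * monom 1 (2 * (k - 1)) - 1))"
proof -
  interpret cycle_barbell k a b using assms by unfold_locales
  show ?thesis
    by (rule poly_eqI_on_Ioi[of 1]) (simp add: poly_char_poly_P_nb poly_monom)
qed

end
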